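(* For sufficiently large $n$ and every $i=1,\dots,\ell(n)-1$ we have $2^{\ell(n)-i}<\mathrm{ilog}(i+1,n)$. Moreover, with $n_1=\sqrt{3\log n}+3$ and $n_{i+1}=\sqrt{3\cdot 2^{\ell(n)-i}\log n_i}$, one has $n_i<\sqrt{6(1-2^{-i})}\,\mathrm{ilog}(i,n)$ for every $i=1,\dots,\ell(n)$.
   Context: $\log$ is the natural logarithm. $\mathrm{ilog}(k,n)$ denotes the $k$-fold iterated logarithm of $n$. $\ell(n)$ is defined by: $\ell(n)+3$ is the smallest integer $k$ such that $\mathrm{ilog}(k,n)<0$; $n$ is assumed large enough that $\ell(n)\ge 1$. *)

theory Defs
  imports Complex_Main
begin

fun ilog :: "nat \<Rightarrow> real \<Rightarrow> real" where
  "ilog 0 x = x"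
| "ilog (Suc k) x = ln (ilog k x)"

definition ell :: "nat \<Rightarrow> nat" where
  "ell n = (LEAST k. ilog k (real n) < 0) - 3"

(* the sequence n_i, i >= 1 (index 0 unused):
   n_1 = sqrt(3 log n) + 3,  n_{i+1} = sqrt(3 * 2^(ell n - i) * log n_i) *)
fun nseq :: "nat \<Rightarrow> nat \<Rightarrow> real" where
  "nseq n 0 = 0"
| "nseq n (Suc 0) = sqrt (3 * ln (real n)) + 3"
| "nseq n (Suc (Suc i)) = sqrt (3 * 2 ^ (ell n - Suc i) * ln (nseq n (Suc i)))"

end

theory Submission
  imports Defs
begin

text \<open>
  Write \<open>a\<^sub>j = ilog j n\<close> and \<open>L = \<ell>(n)\<close>. For large \<open>n\<close> all of \<open>a\<^sub>0, \<dots>, a\<^sub>L\<close> exceed 2.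
  Since \<open>a\<^sub>j = exp a\<^sub>j\<^sub>+\<^sub>1 \<ge> 2 a\<^sub>j\<^sub>+\<^sub>1\<close>, going down from \<open>a\<^sub>L > 2\<close> gives \<open>a\<^sub>i > 2\<^bsup>L-i+1\<^esup>\<close>,
  which is the first claim. For the second, induct on \<open>i\<close> with \<open>p = 2\<^sup>-\<^sup>i\<close>: if
  \<open>n\<^sub>i < c a\<^sub>i\<close> with \<open>c = sqrt (6 (1 - p)) < e\<close>, then \<open>ln n\<^sub>i < 1 + a\<^sub>i\<^sub>+\<^sub>1 \<le> (2 - p) a\<^sub>i\<^sub>+\<^sub>1\<close>,
  and with \<open>2\<^bsup>L-i\<^esup> < a\<^sub>i\<^sub>+\<^sub>1\<close> this yields \<open>n\<^sub>i\<^sub>+\<^sub>1\<^sup>2 < 6 (1 - p/2) a\<^sub>i\<^sub>+\<^sub>1\<^sup>2\<close>.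
\<close>

lemma exp_one_ge_five_halves: "5/2 \<le> exp (1::real)"
  using exp_lower_Taylor_quadratic[of 1] by simp

lemma two_mul_le_exp:
  fixes x :: real
  assumes "0 \<le> x"
  shows "2 * x \<le> exp x"
proof -
  have "2 * x \<le> 1 + x + x\<^sup>2 / 2"
    using zero_le_power2[of "x - 1"] by (simp add: power2_diff algebra_simps)
  also have "\<dots> \<le> exp x"
    using assms by (rule exp_lower_Taylor_quadratic)
  finally show ?thesis .
qed

text \<open>The real \<open>ln\<close> satisfies \<open>ln 0 = 0\<close> and \<open>ln y = ln \<bar>y\<bar>\<close>; hence both sign hypotheses.\<close>

lemma exp_less_of_less_ln:
  fixes c y :: real
  assumes "0 \<le> c" "c < ln y" "0 \<le> y"
  shows "exp c < y"
proof -
  have "0 < y"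
    using assms by (cases "y = 0") auto
  then show ?thesis
    using assms(2) by (metis exp_less_cancel_iff exp_ln)
qed

lemma ilog_Suc_inner: "ilog (Suc k) x = ilog k (ln x)"
  by (induction k) auto

lemma ilog_gt_of_exp_tower_less: "(exp ^^ j) b < x \<Longrightarrow> b < ilog j x"
proof (induction j arbitrary: x)
  case 0
  then show ?case by simp
next
  case (Suc j)
  then have "exp ((exp ^^ j) b) < x"
    by simp
  moreover from this have "0 < x"
    using exp_gt_zero less_trans by blast
  ultimately have "(exp ^^ j) b < ln x"
    by (metis exp_less_cancel_iff exp_ln)
  then show ?case
    using Suc.IH by (simp add: ilog_Suc_inner del: ilog.simps)
qed

lemma exp_tower_mono: "j \<le> k \<Longrightarrow> (exp ^^ j) (b::real) \<le> (exp ^^ k) b"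
  by (rule lift_Suc_mono_le[of "\<lambda>j. (exp ^^ j) b"]) (auto intro: less_imp_le exp_gt_self)

lemma ilog_gt_two_before_negative:
  assumes neg: "ilog m x < 0" and nonneg: "\<And>i. i < m \<Longrightarrow> 0 \<le> ilog i x" and "j + 3 \<le> m"
  shows "2 < ilog j x"
proof -
  define L where "L = m - 3"
  have m: "m = L + 3"
    using \<open>j + 3 \<le> m\<close> by (simp add: L_def)
  have "ln (ilog (L + 2) x) < 0"
    using neg by (simp add: m numeral_3_eq_3)
  then have "0 < ilog (L + 2) x"
    using nonneg[of "L + 2"] by (cases "ilog (L + 2) x = 0") (auto simp: m)
  then have "exp 0 < ilog (L + 1) x"
    using nonneg[of "L + 1"] by (intro exp_less_of_less_ln) (auto simp: m numeral_2_eq_2)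
  then have "exp 1 < ilog L x"
    using nonneg[of L] by (intro exp_less_of_less_ln) (auto simp: m)
  then have top: "2 < ilog L x"
    using exp_one_ge_five_halves by linarith
  have "j \<le> L"
    using \<open>j + 3 \<le> m\<close> by (simp add: m)
  then show ?thesis
  proof (induction j rule: inc_induct)
    case base
    show ?case by (fact top)
  next
    case (step i)
    then have "exp 2 < ilog i x"
      using nonneg[of i] by (intro exp_less_of_less_ln) (auto simp: m)
    then show ?case
      using exp_gt_self[of 2] by linarith
  qed
qed

text \<open>
  If the iterated logarithm never becomes negative (possible because \<open>ln 0 = 0\<close>), then
  \<open>\<ell>(n)\<close> is the unspecified constant \<open>(LEAST k. False) - 3\<close>; the hypothesis covers this case.
\<close>

lemma ilog_gt_two_upto_ell:
  assumes n: "(exp ^^ (LEAST k::nat. False)) 2 < real n" and j: "j \<le> ell n"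
  shows "2 < ilog j (real n)"
proof (cases "\<exists>k. ilog k (real n) < 0")
  case True
  define m where "m = (LEAST k. ilog k (real n) < 0)"
  have neg: "ilog m (real n) < 0"
    using LeastI_ex[OF True] by (simp add: m_def)
  have nonneg: "\<And>i. i < m \<Longrightarrow> 0 \<le> ilog i (real n)"
    using not_less_Least by (force simp: m_def)
  show ?thesis
  proof (cases "j + 3 \<le> m")
    case True
    with neg nonneg show ?thesis
      by (rule ilog_gt_two_before_negative)
  next
    case False
    then have "j = 0"
      using j by (simp add: ell_def m_def)
    then show ?thesis
      using n exp_tower_mono[of 0 "LEAST k::nat. False" 2] by simp
  qed
next
  case False
  then have "j \<le> (LEAST k::nat. False)"
    using j by (simp add: ell_def)
  then show ?thesis
    using n exp_tower_mono by (blast intro: ilog_gt_of_exp_tower_less le_less_trans)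
qed

lemma two_pow_lt_ilog:
  assumes gt2: "\<And>j. j \<le> L \<Longrightarrow> 2 < ilog j x" and "i \<le> L"
  shows "2 ^ (L - i + 1) < ilog i x"
  using \<open>i \<le> L\<close>
proof (induction i rule: inc_induct)
  case base
  show ?case
    using gt2 by simp
next
  case (step i)
  then have "2 * 2 ^ (L - Suc i + 1) < 2 * ln (ilog i x)"
    by simp
  also have "\<dots> \<le> ilog i x"
    using two_mul_le_exp[of "ln (ilog i x)"] step.IH gt2[of i] step.hyps by simp
  finally show ?case
    using step.hyps by (simp add: Suc_diff_Suc)
qed

lemma sqrt_three_mul_add_three_lt:
  fixes t :: real
  assumes "16 \<le> t"
  shows "sqrt (3 * t) + 3 < sqrt 3 * t"
proof -
  define s where "s = sqrt t"
  have "4 \<le> s"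
    using real_sqrt_le_mono[OF assms] by (simp add: s_def)
  then have "12 \<le> s * s - s"
    using mult_right_mono[of 4 s s] by linarith
  then have "12 \<le> sqrt 3 * (s * s - s)"
    using mult_mono[of 1 "sqrt 3" 12 "s * s - s"] by simp
  moreover have "t = s * s" "sqrt (3 * t) = sqrt 3 * s"
    using assms by (simp_all add: s_def real_sqrt_mult)
  ultimately show ?thesis
    by (simp add: algebra_simps)
qed

lemma sqrt_three_mul_ln_bounds:
  fixes y a K p :: real
  assumes y: "exp (1/2) \<le> y" "y < sqrt (6 * (1 - p)) * a"
    and K: "2 \<le> K" "K < ln a" and p: "0 < p" "p \<le> 1/2"
  shows "exp (1/2) \<le> sqrt (3 * K * ln y)"
    and "sqrt (3 * K * ln y) < sqrt (6 * (1 - p/2)) * ln a"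
proof -
  have "0 < y"
    using y(1) exp_gt_zero[of "1/2"] by linarith
  then have ln_y: "1/2 \<le> ln y"
    using y(1) ln_ge_iff by blast
  have "exp (1/2) ^ 2 = exp (1::real)"
    by (simp add: power2_eq_square flip: exp_add)
  also have "\<dots> \<le> 3 * 2 * (1/2)"
    using exp_le by simp
  also have "\<dots> \<le> 3 * K * ln y"
    using K ln_y by (intro mult_mono) auto
  finally show "exp (1/2) \<le> sqrt (3 * K * ln y)"
    using real_sqrt_le_mono by fastforce
  define c where "c = sqrt (6 * (1 - p))"
  have "0 < c"
    using p by (simp add: c_def)
  have "c\<^sup>2 < (5/2)\<^sup>2"
    using p by (simp add: c_def power2_eq_square)
  also have "\<dots> \<le> exp 1 ^ 2"
    using exp_one_ge_five_halves by (intro power_mono) auto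
  finally have "ln c < 1"
    using \<open>0 < c\<close> by (metis exp_less_cancel_iff exp_ln power_less_imp_less_base exp_ge_zero)
  also have "1 \<le> (1 - p) * ln a"
    using mult_mono[of "1/2" "1 - p" 2 "ln a"] p K by simp
  finally have ln_c: "ln c < (1 - p) * ln a" .
  have "0 < c * a"
    using \<open>0 < y\<close> y(2) by (simp add: c_def)
  then have "0 < a"
    using \<open>0 < c\<close> zero_less_mult_pos by blast
  have "ln y < ln (c * a)"
    using \<open>0 < y\<close> y(2) by (simp add: c_def)
  also have "\<dots> = ln c + ln a"
    using \<open>0 < c\<close> \<open>0 < a\<close> by (simp add: ln_mult)
  finally have "ln y < (2 - p) * ln a"
    using ln_c by (simp add: algebra_simps)
  have "3 * K * ln y \<le> 3 * ln a * ln y"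
    using K ln_y by (intro mult_right_mono) auto
  also have "\<dots> < 3 * ln a * ((2 - p) * ln a)"
    using \<open>ln y < (2 - p) * ln a\<close> K by (intro mult_strict_left_mono) auto
  also have "\<dots> = (sqrt (6 * (1 - p/2)) * ln a)\<^sup>2"
    using p by (simp add: power_mult_distrib power2_eq_square algebra_simps)
  finally show "sqrt (3 * K * ln y) < sqrt (6 * (1 - p/2)) * ln a"
    using K p by (simp add: real_less_lsqrt)
qed

lemma nseq_bounds:
  assumes big: "16 \<le> ln (real n)" and gt2: "\<And>j. j \<le> ell n \<Longrightarrow> 2 < ilog j (real n)"
    and "1 \<le> i" "i \<le> ell n"
  shows "exp (1/2) \<le> nseq n i \<and> nseq n i < sqrt (6 * (1 - 1 / 2 ^ i)) * ilog i (real n)"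
  using \<open>1 \<le> i\<close>
proof (induction rule: dec_induct)
  case base
  have "exp (1/2::real) \<le> 3"
    using exp_le exp_le_cancel_iff[of "1/2" 1] by linarith
  then show ?case
    using sqrt_three_mul_add_three_lt[OF big] big by (simp add: add_increasing)
next
  case (step k)
  then obtain k' where k': "k = Suc k'"
    using not0_implies_Suc by force
  have "k < ell n"
    using step.hyps \<open>i \<le> ell n\<close> by simp
  then have "(2::real) ^ 1 \<le> 2 ^ (ell n - k)"
    by (intro power_increasing) auto
  moreover have "2 ^ (ell n - k) < ln (ilog k (real n))"
    using two_pow_lt_ilog[of "ell n", OF gt2, of "Suc k"] \<open>k < ell n\<close> by (simp add: Suc_diff_Suc)
  moreover have "1 / 2 ^ k \<le> (1/2::real)"
    using power_increasing[of 1 k "2::real"] step.hyps by (simp add: field_simps)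
  ultimately show ?case
    using sqrt_three_mul_ln_bounds[of "nseq n k" "1 / 2 ^ k" "ilog k (real n)" "2 ^ (ell n - k)"]
      step.IH step.hyps by (simp add: k')
qed

theorem mainTheorem6:
  shows "\<forall>\<^sub>F n in sequentially.
           (\<forall>i\<in>{1..ell n - 1}. (2::real) ^ (ell n - i) < ilog (i + 1) (real n)) \<and>
           (\<forall>i\<in>{1..ell n}. nseq n i < sqrt (6 * (1 - 2 powi (- int i))) * ilog i (real n))"
proof -
  define T :: real where "T = max (exp 16) ((exp ^^ (LEAST k::nat. False)) 2)"
  have "\<forall>\<^sub>F n in sequentially. T < real n"
    using filterlim_real_sequentially by (simp add: filterlim_at_top_dense)
  then show ?thesis
  proof (rule eventually_mono)
    fix n :: nat
    assume "T < real n"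
    then have "exp 16 < real n" and gt2: "\<And>j. j \<le> ell n \<Longrightarrow> 2 < ilog j (real n)"
      using ilog_gt_two_upto_ell by (auto simp: T_def)
    then have big: "16 \<le> ln (real n)"
      using ln_ge_iff[of "real n" 16] exp_gt_zero[of 16] by linarith
    have "(2::real) ^ (ell n - i) < ilog (i + 1) (real n)" if "i \<in> {1..ell n - 1}" for i
      using two_pow_lt_ilog[of "ell n", OF gt2, of "i + 1"] that by (auto simp: Suc_diff_Suc)
    moreover have "nseq n i < sqrt (6 * (1 - 2 powi (- int i))) * ilog i (real n)"
      if "i \<in> {1..ell n}" for i
      using nseq_bounds[OF big gt2] that by (simp add: power_int_minus_divide)
    ultimately show "(\<forall>i\<in>{1..ell n - 1}. (2::real) ^ (ell n - i) < ilog (i + 1) (real n)) \<and>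
           (\<forall>i\<in>{1..ell n}. nseq n i < sqrt (6 * (1 - 2 powi (- int i))) * ilog i (real n))"
      by blast
  qed
qed

end
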